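(* Let $A$ be a superdomain and $S\subseteq A\setminus\{0\}$ with $1\in S$, $S\cdot S\subseteq S$ and $A^2\setminus\{0\}\subseteq S$, where $A^2=\bigcup_{a\in A}a\cdot a$. Then $S$ is a Marshall coherent subset of $A$, and in $A/_mS$ the product $[a][b]$ is a singleton for all $[a],[b]\in A/_mS$.
   Context: Multivalued operations are extended to subsets by unions. A superring is a structure $(S,+,\cdot,-,0,1)$ with multivalued addition and multiplication such that $(S,+,-,0)$ is a commutative multigroup, $(S,\cdot,1)$ is a commutative multimonoid, $a\cdot0=\{0\}$, $c(a+b)\subseteq ca+cb$, and $-(ab)=(-a)b=a(-b)$ (multigroup axioms: $c\in ab\Rightarrow a\in c\,r(b)$ and $b\in r(a)c$; $b\in a\cdot1\iff a=b$; $(ab)c\subseteq a(bc)$; $ab=ba$; multimonoid: the last two and $a\in 1\cdot a$). A superdomain is a nontrivial superring in which $0\in ab$ iff $a=0$ or $b=0$. A subset $S$ of a superring $A$ is Marshall coherent if it is multiplicative ($1\in S$, $S\cdot S\subseteq S$) and whenever $x,a\in A$ and $x\in as$ for some $s\in S$, there are $P,Q\subseteq S$ with $xP=aQ$. For $a,b\in A$, $a\sim_S b$ iff there are nonempty $X,Y\subseteq S$ with $aX=bY$. The Marshall quotient $A/_mS$ is the set of $\sim_S$-classes $[a]$ with: $[c]\in[a]+[b]$ iff there exist $c'\sim c$, $a'\sim a$, $b'\sim b$ with $c'\in a'+b'$; $[c]\in[a][b]$ iff there exist $c'\sim c,a'\sim a,b'\sim b$ with $c'\in a'b'$; $-[a]:=[-a]$;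 zero $[0]$, unit $[1]$. *)

theory Defs
  imports Main
begin

text \<open>A superring is modelled on the whole type 'a (the carrier), with multivalued
  addition and multiplication given as set-valued functions.\<close>

definition lift :: "('a \<Rightarrow> 'a \<Rightarrow> 'a set) \<Rightarrow> 'a set \<Rightarrow> 'a set \<Rightarrow> 'a set" where
  "lift f X Y = (\<Union>x\<in>X. \<Union>y\<in>Y. f x y)"

definition multigroup :: "('a \<Rightarrow> 'a \<Rightarrow> 'a set) \<Rightarrow> ('a \<Rightarrow> 'a) \<Rightarrow> 'a \<Rightarrow> bool" where
  "multigroup op r e \<longleftrightarrow>
     (\<forall>a b c. c \<in> op a b \<longrightarrow> a \<in> op c (r b) \<and> b \<in> op (r a) c) \<and>
     (\<forall>a b. b \<in> op a e \<longleftrightarrow> a = b) \<and>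
     (\<forall>a b c. lift op (op a b) {c} \<subseteq> lift op {a} (op b c)) \<and>
     (\<forall>a b. op a b = op b a)"

definition multimonoid :: "('a \<Rightarrow> 'a \<Rightarrow> 'a set) \<Rightarrow> 'a \<Rightarrow> bool" where
  "multimonoid op e \<longleftrightarrow>
     (\<forall>a b c. lift op (op a b) {c} \<subseteq> lift op {a} (op b c)) \<and>
     (\<forall>a b. op a b = op b a) \<and>
     (\<forall>a. a \<in> op e a)"

definition superring ::
  "('a \<Rightarrow> 'a \<Rightarrow> 'a set) \<Rightarrow> ('a \<Rightarrow> 'a \<Rightarrow> 'a set) \<Rightarrow> ('a \<Rightarrow> 'a) \<Rightarrow> 'a \<Rightarrow> 'a \<Rightarrow> bool" where
  "superring add mul neg zero one \<longleftrightarrow>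
     multigroup add neg zero \<and>
     multimonoid mul one \<and>
     (\<forall>a. mul a zero = {zero}) \<and>
     (\<forall>a b c. lift mul {c} (add a b) \<subseteq> lift add (mul c a) (mul c b)) \<and>
     (\<forall>a b. neg ` (mul a b) = mul (neg a) b \<and> mul (neg a) b = mul a (neg b))"

definition superdomain ::
  "('a \<Rightarrow> 'a \<Rightarrow> 'a set) \<Rightarrow> ('a \<Rightarrow> 'a \<Rightarrow> 'a set) \<Rightarrow> ('a \<Rightarrow> 'a) \<Rightarrow> 'a \<Rightarrow> 'a \<Rightarrow> bool" where
  "superdomain add mul neg zero one \<longleftrightarrow>
     superring add mul neg zero one \<and> zero \<noteq> one \<and>
     (\<forall>a b. zero \<in> mul a b \<longleftrightarrow> a = zero \<or> b = zero)"

definition multiplicative_set :: "('a \<Rightarrow> 'a \<Rightarrow> 'a set) \<Rightarrow> 'a \<Rightarrow> 'a set \<Rightarrow> bool" where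
  "multiplicative_set mul one S \<longleftrightarrow> one \<in> S \<and> lift mul S S \<subseteq> S"

text \<open>Marshall coherence (the witnesses P, Q are taken nonempty).\<close>
definition marshall_coherent :: "('a \<Rightarrow> 'a \<Rightarrow> 'a set) \<Rightarrow> 'a \<Rightarrow> 'a set \<Rightarrow> bool" where
  "marshall_coherent mul one S \<longleftrightarrow>
     multiplicative_set mul one S \<and>
     (\<forall>x a. (\<exists>s\<in>S. x \<in> mul a s) \<longrightarrow>
        (\<exists>P Q. P \<subseteq> S \<and> Q \<subseteq> S \<and> P \<noteq> {} \<and> Q \<noteq> {} \<and> lift mul {x} P = lift mul {a} Q))"

definition msim :: "('a \<Rightarrow> 'a \<Rightarrow> 'a set) \<Rightarrow> 'a set \<Rightarrow> 'a \<Rightarrow> 'a \<Rightarrow> bool" where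
  "msim mul S a b \<longleftrightarrow>
     (\<exists>X Y. X \<subseteq> S \<and> Y \<subseteq> S \<and> X \<noteq> {} \<and> Y \<noteq> {} \<and> lift mul {a} X = lift mul {b} Y)"

definition mclass :: "('a \<Rightarrow> 'a \<Rightarrow> 'a set) \<Rightarrow> 'a set \<Rightarrow> 'a \<Rightarrow> 'a set" where
  "mclass mul S a = {b. msim mul S b a}"

definition mquot_mul :: "('a \<Rightarrow> 'a \<Rightarrow> 'a set) \<Rightarrow> 'a set \<Rightarrow> 'a \<Rightarrow> 'a \<Rightarrow> 'a set set" where
  "mquot_mul mul S a b =
     {mclass mul S c | c. \<exists>c' a' b'. msim mul S c' c \<and> msim mul S a' a \<and> msim mul S b' b \<and>
                                     c' \<in> mul a' b'}"

end

theory Submission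
  imports Defs
begin

text \<open>If squares of nonzero elements lie in \<open>S\<close>, then for \<open>x \<in> a s\<close> with \<open>a \<noteq> 0\<close> both
  \<open>a a\<close> and \<open>x a \<subseteq> a a s\<close> lie in \<open>S\<close>, and \<open>x (a a) = a (x a)\<close> witnesses \<open>x \<sim> a\<close>; this is
  coherence. Likewise any two \<open>c\<^sub>1, c\<^sub>2 \<in> a b\<close> satisfy \<open>c\<^sub>1 (c\<^sub>2 (a b)) = c\<^sub>2 (c\<^sub>1 (a b))\<close>
  with \<open>c\<^sub>i (a b) \<subseteq> (a b)(a b) = (a a)(b b) \<subseteq> S\<close>, so all of \<open>a b\<close> lies in a single class.
  For a coherent \<open>S\<close> the class product \<open>[a][b]\<close> is the set of classes of elements of \<open>a b\<close>,
  hence a singleton.\<close>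

lemma lift_singleton [simp]: "lift f {a} {b} = f a b"
  unfolding lift_def by simp

lemma lift_mono: "X \<subseteq> X' \<Longrightarrow> Y \<subseteq> Y' \<Longrightarrow> lift f X Y \<subseteq> lift f X' Y'"
  unfolding lift_def by blast

locale comm_multimonoid =
  fixes mul :: "'a \<Rightarrow> 'a \<Rightarrow> 'a set" and one :: 'a
  assumes multimonoid: "multimonoid mul one"
begin

lemma mul_commute: "mul a b = mul b a"
  using multimonoid unfolding multimonoid_def by blast

lemma lift_commute: "lift mul X Y = lift mul Y X"
  unfolding lift_def using mul_commute by blast

lemma mul_assoc_singleton: "lift mul {a} (mul b c) = lift mul (mul a b) {c}"
proof -
  have assoc: "\<And>a b c. lift mul (mul a b) {c} \<subseteq> lift mul {a} (mul b c)"
    using multimonoid unfolding multimonoid_def by blast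
  have "lift mul {a} (mul b c) = lift mul (mul b c) {a}" by (rule lift_commute)
  also have "\<dots> \<subseteq> lift mul {b} (mul c a)" by (rule assoc)
  also have "\<dots> = lift mul (mul c a) {b}" by (rule lift_commute)
  also have "\<dots> \<subseteq> lift mul {c} (mul a b)" by (rule assoc)
  also have "\<dots> = lift mul (mul a b) {c}" by (rule lift_commute)
  finally show ?thesis using assoc by blast
qed

lemma lift_assoc: "lift mul (lift mul X Y) Z = lift mul X (lift mul Y Z)"
  using mul_assoc_singleton unfolding lift_def by (simp, blast)

lemma lift_left_commute: "lift mul X (lift mul Y Z) = lift mul Y (lift mul X Z)"
  by (metis lift_assoc lift_commute)

lemma lift_swap_middle:
  "lift mul (lift mul A B) (lift mul C D) = lift mul (lift mul A C) (lift mul B D)"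
  by (simp add: lift_assoc lift_left_commute[of B C])

end

locale superring_structure =
  fixes add mul :: "'a \<Rightarrow> 'a \<Rightarrow> 'a set" and neg :: "'a \<Rightarrow> 'a" and zero one :: 'a
  assumes superring: "superring add mul neg zero one"
begin

sublocale comm_multimonoid mul one
  using superring unfolding superring_def by unfold_locales blast

lemma mul_zero [simp]: "mul a zero = {zero}"
  using superring unfolding superring_def by blast

lemma zero_mul [simp]: "mul zero a = {zero}"
  using mul_zero mul_commute by metis

text \<open>Distributivity turns \<open>0 \<in> c 0 \<subseteq> c (-b + b)\<close> into an element of \<open>c(-b) + c b\<close>.\<close>
lemma mul_nonempty: "mul c b \<noteq> {}"
proof -
  have mg: "multigroup add neg zero" using superring unfolding superring_def by blast
  then have "b \<in> add b zero" unfolding multigroup_def by blast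
  with mg have "zero \<in> add (neg b) b" unfolding multigroup_def by blast
  then have "zero \<in> lift mul {c} (add (neg b) b)" unfolding lift_def by force
  moreover have "lift mul {c} (add (neg b) b) \<subseteq> lift add (mul c (neg b)) (mul c b)"
    using superring unfolding superring_def by blast
  ultimately show ?thesis unfolding lift_def by blast
qed

lemma lift_nonempty: "X \<noteq> {} \<Longrightarrow> Y \<noteq> {} \<Longrightarrow> lift mul X Y \<noteq> {}"
proof -
  assume "X \<noteq> {}" "Y \<noteq> {}"
  then obtain x y where "x \<in> X" "y \<in> Y" by blast
  moreover obtain z where "z \<in> mul x y" using mul_nonempty by blast
  ultimately show ?thesis unfolding lift_def by blast
qed

context
  fixes S :: "'a set"
  assumes multiplicative: "multiplicative_set mul one S"
begin

lemma lift_closed: "X \<subseteq> S \<Longrightarrow> Y \<subseteq> S \<Longrightarrow> lift mul X Y \<subseteq> S"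
proof -
  assume "X \<subseteq> S" "Y \<subseteq> S"
  then have "lift mul X Y \<subseteq> lift mul S S" by (rule lift_mono)
  with multiplicative show ?thesis unfolding multiplicative_set_def by blast
qed

lemma msim_refl: "msim mul S a a"
  using multiplicative unfolding msim_def multiplicative_set_def by blast

lemma msim_sym: "msim mul S a b \<Longrightarrow> msim mul S b a"
proof -
  assume "msim mul S a b"
  then obtain X Y where "X \<subseteq> S" "Y \<subseteq> S" "X \<noteq> {}" "Y \<noteq> {}"
    "lift mul {a} X = lift mul {b} Y"
    unfolding msim_def by blast
  then show ?thesis unfolding msim_def by (intro exI[of _ Y] exI[of _ X]) simp
qed

lemma msim_trans:
  assumes "msim mul S a b" "msim mul S b c"
  shows "msim mul S a c"
proof -
  obtain X Y where XY: "X \<subseteq> S" "Y \<subseteq> S" "X \<noteq> {}" "Y \<noteq> {}"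
    and aX: "lift mul {a} X = lift mul {b} Y"
    using assms(1) unfolding msim_def by blast
  obtain Z W where ZW: "Z \<subseteq> S" "W \<subseteq> S" "Z \<noteq> {}" "W \<noteq> {}"
    and bZ: "lift mul {b} Z = lift mul {c} W"
    using assms(2) unfolding msim_def by blast
  have "lift mul {a} (lift mul X Z) = lift mul (lift mul {b} Y) Z"
    by (simp add: aX flip: lift_assoc)
  also have "\<dots> = lift mul (lift mul {b} Z) Y"
    by (simp add: lift_assoc lift_commute[of Y Z])
  also have "\<dots> = lift mul {c} (lift mul W Y)"
    by (simp add: bZ lift_assoc)
  finally have "lift mul {a} (lift mul X Z) = lift mul {c} (lift mul W Y)" .
  moreover have "lift mul X Z \<subseteq> S" "lift mul W Y \<subseteq> S"
    using XY ZW lift_closed by auto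
  moreover have "lift mul X Z \<noteq> {}" "lift mul W Y \<noteq> {}"
    using XY ZW lift_nonempty by auto
  ultimately show ?thesis unfolding msim_def by blast
qed

lemma mclass_eq: "msim mul S c d \<Longrightarrow> mclass mul S c = mclass mul S d"
  unfolding mclass_def using msim_sym msim_trans by blast

end

context
  fixes S :: "'a set"
  assumes coherent: "marshall_coherent mul one S"
begin

lemma coherent_multiplicative: "multiplicative_set mul one S"
  using coherent unfolding marshall_coherent_def by blast

lemma coherent_msim: "s \<in> S \<Longrightarrow> x \<in> mul a s \<Longrightarrow> msim mul S x a"
  using coherent unfolding marshall_coherent_def msim_def by blast

text \<open>Multiplying \<open>c\<close> by some \<open>x \<in> X\<close>, where \<open>a X = a' Y\<close>, yields \<open>d \<in> c' y\<close> with
  \<open>c' \<in> a' b\<close> and \<open>y \<in> Y\<close>; by coherence \<open>c \<sim> d \<sim> c'\<close>.\<close>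
lemma msim_mul_left:
  assumes c: "c \<in> mul a b" and a: "msim mul S a a'"
  shows "\<exists>c'\<in>mul a' b. msim mul S c c'"
proof -
  obtain X Y where XY: "X \<subseteq> S" "Y \<subseteq> S" "X \<noteq> {}"
    and aX: "lift mul {a} X = lift mul {a'} Y"
    using a unfolding msim_def by blast
  obtain x where x: "x \<in> X" using XY by blast
  obtain d where d: "d \<in> mul c x" using mul_nonempty by blast
  have "d \<in> lift mul (mul a b) X"
    using c d x unfolding lift_def by blast
  also have "\<dots> = lift mul (lift mul {a} X) {b}"
    by (simp add: lift_assoc lift_commute[of "{b}" X] flip: lift_singleton)
  also have "\<dots> = lift mul (mul a' b) Y"
    by (simp add: aX lift_assoc lift_commute[of "{b}" Y] flip: lift_singleton)
  finally obtain c' y where c': "c' \<in> mul a' b" "y \<in> Y" "d \<in> mul c' y"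
    unfolding lift_def by blast
  have "msim mul S d c" using coherent_msim d x XY by blast
  moreover have "msim mul S d c'" using coherent_msim c' XY by blast
  ultimately have "msim mul S c c'"
    using msim_sym msim_trans coherent_multiplicative by blast
  with c' show ?thesis by blast
qed

lemma mquot_mul_eq_image: "mquot_mul mul S a b = mclass mul S ` mul a b"
proof
  show "mclass mul S ` mul a b \<subseteq> mquot_mul mul S a b"
    unfolding mquot_mul_def using msim_refl coherent_multiplicative by blast
next
  show "mquot_mul mul S a b \<subseteq> mclass mul S ` mul a b"
  proof
    fix K assume "K \<in> mquot_mul mul S a b"
    then obtain c c' a' b' where K: "K = mclass mul S c"
      and c'c: "msim mul S c' c" and "msim mul S a' a" "msim mul S b' b"
      and c': "c' \<in> mul a' b'"
      unfolding mquot_mul_def by blast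
    obtain c2 where c2: "c2 \<in> mul a b'" "msim mul S c' c2"
      using msim_mul_left[OF c' \<open>msim mul S a' a\<close>] by blast
    have "c2 \<in> mul b' a" using c2(1) mul_commute by blast
    then obtain c3 where "c3 \<in> mul b a" and c3: "msim mul S c2 c3"
      using msim_mul_left \<open>msim mul S b' b\<close> by blast
    then have "c3 \<in> mul a b" using mul_commute by blast
    have "msim mul S c c3"
      using c'c c2 c3 msim_sym msim_trans coherent_multiplicative by blast
    then show "K \<in> mclass mul S ` mul a b"
      using K \<open>c3 \<in> mul a b\<close> mclass_eq coherent_multiplicative by blast
  qed
qed

lemma mquot_mul_singleton:
  assumes "\<And>c d. c \<in> mul a b \<Longrightarrow> d \<in> mul a b \<Longrightarrow> msim mul S c d"
  shows "\<exists>C. mquot_mul mul S a b = {C}"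
proof -
  obtain c where c: "c \<in> mul a b" using mul_nonempty by blast
  have "mclass mul S d = mclass mul S c" if "d \<in> mul a b" for d
    using mclass_eq[OF coherent_multiplicative assms[OF that c]] .
  then have "mclass mul S ` mul a b = {mclass mul S c}"
    using c by blast
  then show ?thesis by (simp add: mquot_mul_eq_image)
qed

end

end

locale square_closed_superdomain =
  fixes add mul :: "'a \<Rightarrow> 'a \<Rightarrow> 'a set" and neg :: "'a \<Rightarrow> 'a" and zero one :: 'a
    and S :: "'a set"
  assumes superdomain: "superdomain add mul neg zero one"
    and multiplicative: "multiplicative_set mul one S"
    and squares: "(\<Union>a. mul a a) - {zero} \<subseteq> S"
begin

sublocale superring_structure add mul neg zero one
  using superdomain unfolding superdomain_def by unfold_locales blast

lemma square_subset: "a \<noteq> zero \<Longrightarrow> mul a a \<subseteq> S"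
  using superdomain squares unfolding superdomain_def by blast

lemma msim_mul_right:
  assumes s: "s \<in> S" and x: "x \<in> mul a s"
  shows "msim mul S x a"
proof (cases "a = zero")
  case True
  with x have "x = a" by simp
  then show ?thesis using msim_refl[OF multiplicative] by simp
next
  case False
  have aa: "mul a a \<subseteq> S" using square_subset False .
  have "mul x a \<subseteq> lift mul (mul a s) {a}"
    using x unfolding lift_def by blast
  also have "\<dots> = lift mul (mul a a) {s}"
    by (simp add: lift_commute[of _ "{a}"] mul_assoc_singleton)
  also have "\<dots> \<subseteq> S"
    using lift_closed[OF multiplicative aa] s by blast
  finally have xa: "mul x a \<subseteq> S" .
  have "lift mul {x} (mul a a) = lift mul {a} (mul x a)"
    using mul_assoc_singleton[of x a a] lift_commute[of "mul x a" "{a}"] by simp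
  moreover have "mul a a \<noteq> {}" "mul x a \<noteq> {}" using mul_nonempty by auto
  ultimately show ?thesis unfolding msim_def using aa xa by blast
qed

lemma marshall_coherent: "marshall_coherent mul one S"
  using multiplicative msim_mul_right
  unfolding marshall_coherent_def msim_def by blast

lemma mul_msim:
  assumes c1: "c1 \<in> mul a b" and c2: "c2 \<in> mul a b"
  shows "msim mul S c1 c2"
proof (cases "a = zero \<or> b = zero")
  case True
  with assms have "c1 = c2" by auto
  then show ?thesis using msim_refl[OF multiplicative] by simp
next
  case False
  let ?W = "mul a b"
  have "lift mul ?W ?W = lift mul (mul a a) (mul b b)"
    using lift_swap_middle[of "{a}" "{b}" "{a}" "{b}"] by simp
  also have "\<dots> \<subseteq> S"
    using False square_subset lift_closed[OF multiplicative] by blast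
  finally have WW: "lift mul ?W ?W \<subseteq> S" .
  have cW: "lift mul {c} ?W \<subseteq> S" if "c \<in> ?W" for c
    using that WW lift_mono[of "{c}" ?W ?W ?W mul] by blast
  have "lift mul {c1} (lift mul {c2} ?W) = lift mul {c2} (lift mul {c1} ?W)"
    by (rule lift_left_commute)
  moreover have "lift mul {c2} ?W \<noteq> {}" "lift mul {c1} ?W \<noteq> {}"
    using lift_nonempty mul_nonempty by auto
  ultimately show ?thesis
    unfolding msim_def using cW[OF c1] cW[OF c2] by blast
qed

end

theorem theorem4p7:
  fixes add mul :: "'a \<Rightarrow> 'a \<Rightarrow> 'a set" and neg :: "'a \<Rightarrow> 'a" and zero one :: 'a
    and S :: "'a set"
  assumes "superdomain add mul neg zero one"
    and "S \<subseteq> UNIV - {zero}"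
    and "one \<in> S"
    and "lift mul S S \<subseteq> S"
    and "(\<Union>a. mul a a) - {zero} \<subseteq> S"
  shows "marshall_coherent mul one S \<and>
         (\<forall>a b. \<exists>C. mquot_mul mul S a b = {C})"
proof -
  have "multiplicative_set mul one S"
    using assms(3,4) unfolding multiplicative_set_def by blast
  with assms(1,5) interpret square_closed_superdomain add mul neg zero one S
    by (intro square_closed_superdomain.intro)
  have "\<exists>C. mquot_mul mul S a b = {C}" for a b
    by (rule mquot_mul_singleton[OF marshall_coherent mul_msim])
  with marshall_coherent show ?thesis by blast
qed

end
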